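(* Let $p_j>0$, $q_{j+1}>0$, $r_j\ge 0$ ($j\ge 0$) be the one-step transition probabilities of a random walk on $\mathcal{N}=\{0,1,2,\dots\}$ (up-step $p_j$, holding $r_j$, down-step $q_j$ from state $j$), with $q_0:=0$ and $p_j+q_j+r_j=1$ for all $j\ge0$. Define polynomials $Q_n$ by $Q_0(x)=1$, $p_0Q_1(x)=x-r_0$, and $xQ_n(x)=q_nQ_{n-1}(x)+r_nQ_n(x)+p_nQ_{n+1}(x)$ for $n\ge 1$. Let $\psi$ be the unique Borel probability measure on $[-1,1]$ with infinite support with respect to which the $Q_n$ are orthogonal, let $\eta:=\sup\operatorname{supp}(\psi)$, and let $\theta\ge\eta$. If the random walk is periodic (i.e. $r_j=0$ for all $j$), then $|Q_n(\theta)/Q_n(-\theta)|=1$ for all $n$. If the random walk is aperiodic (i.e. $r_j>0$ for some $j$), then $|Q_n(\theta)/Q_n(-\theta)|$ is decreasing in $n$ and tends to a limit satisfying \[0\le\lim_{n\to\infty}|Q_n(\theta)/Q_n(-\theta)|<1.\]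
   Context: It is known that $\eta>0$ and that $Q_n(x)>0$ for all $n\ge0$ whenever $x\ge\eta$. *)

theory Defs
  imports "HOL-Probability.Probability"
begin

fun Qpoly :: "(nat \<Rightarrow> real) \<Rightarrow> (nat \<Rightarrow> real) \<Rightarrow> (nat \<Rightarrow> real) \<Rightarrow> nat \<Rightarrow> real \<Rightarrow> real" where
  "Qpoly p q r 0 x = 1"
| "Qpoly p q r (Suc 0) x = (x - r 0) / p 0"
| "Qpoly p q r (Suc (Suc n)) x =
     ((x - r (Suc n)) * Qpoly p q r (Suc n) x - q (Suc n) * Qpoly p q r n x) / p (Suc n)"

definition msupp :: "real measure \<Rightarrow> real set" where
  "msupp M = {x. \<forall>e>0. emeasure M (ball x e) > 0}"

end

theory Submission
  imports Defs
begin

text \<open>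
  Reflecting \<open>x \<mapsto> -x\<close> turns \<open>Q\<^sub>n(-x)\<close> into \<open>(-1)\<^sup>n\<close> times the polynomial of the walk
  with holding probabilities \<open>-r\<^sub>j\<close>. For the periodic walk the two walks coincide, whence
  \<open>|Q\<^sub>n(\<theta>)/Q\<^sub>n(-\<theta>)| = 1\<close>. In general the Casoratian \<open>W\<^sub>n\<close> of the two solutions
  \<open>Q\<^sub>n(\<theta>)\<close> and \<open>(-1)\<^sup>nQ\<^sub>n(-\<theta>)\<close> of the recurrence satisfies
  \<open>p\<^sub>n W\<^sub>n = 2 r\<^sub>n Q\<^sub>n(\<theta>) (-1)\<^sup>nQ\<^sub>n(-\<theta>) + q\<^sub>n W\<^sub>(\<^sub>n\<^sub>-\<^sub>1\<^sub>)\<close>, so by induction from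
  \<open>Q\<^sub>n(\<theta>) > 0\<close> the second solution stays positive and \<open>W\<^sub>n \<ge> 0\<close>; as the ratio of the
  two solutions drops by \<open>W\<^sub>n\<close> over a positive denominator, it decreases, strictly at
  every \<open>j\<close> with \<open>r\<^sub>j > 0\<close>.
\<close>

definition casoratian :: "(nat \<Rightarrow> real) \<Rightarrow> (nat \<Rightarrow> real) \<Rightarrow> nat \<Rightarrow> real" where
  "casoratian u v n = u n * v (Suc n) - u (Suc n) * v n"

lemma casoratian_div:
  assumes "v n \<noteq> 0" "v (Suc n) \<noteq> 0"
  shows "u n / v n - u (Suc n) / v (Suc n) = casoratian u v n / (v n * v (Suc n))"
  using assms unfolding casoratian_def by (simp add: field_simps)

lemma Qpoly_Suc:
  assumes "p n \<noteq> 0" "q 0 = 0"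
  shows "p n * Qpoly p q r (Suc n) x = (x - r n) * Qpoly p q r n x - q n * Qpoly p q r (n - 1) x"
  using assms by (cases n) auto

lemma Qpoly_uminus:
  "Qpoly p q r n (-x) = (-1) ^ n * Qpoly p q (\<lambda>j. - r j) n x"
  by (induction p q r n x rule: Qpoly.induct) (simp_all add: field_simps)

lemma casoratian_Qpoly:
  assumes "p n \<noteq> 0" "q 0 = 0"
  shows "p n * casoratian (\<lambda>k. Qpoly p q r k x) (\<lambda>k. Qpoly p q s k x) n
           = (r n - s n) * Qpoly p q r n x * Qpoly p q s n x
             + q n * casoratian (\<lambda>k. Qpoly p q r k x) (\<lambda>k. Qpoly p q s k x) (n - 1)"
proof -
  let ?u = "\<lambda>k. Qpoly p q r k x" and ?v = "\<lambda>k. Qpoly p q s k x"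
  have "p n * casoratian ?u ?v n = ?u n * (p n * ?v (Suc n)) - (p n * ?u (Suc n)) * ?v n"
    unfolding casoratian_def by (simp add: algebra_simps)
  also have "\<dots> = (r n - s n) * ?u n * ?v n + q n * (?u (n - 1) * ?v n - ?u n * ?v (n - 1))"
    unfolding Qpoly_Suc[of p n q r x, OF assms] Qpoly_Suc[of p n q s x, OF assms] by (simp add: algebra_simps)
  also have "q n * (?u (n - 1) * ?v n - ?u n * ?v (n - 1)) = q n * casoratian ?u ?v (n - 1)"
    using assms(2) unfolding casoratian_def by (cases n) auto
  finally show ?thesis .
qed

context
  fixes p q r s :: "nat \<Rightarrow> real" and x :: real
  assumes p_pos: "\<And>j. p j > 0" and q_nonneg: "\<And>j. q j \<ge> 0" and q0: "q 0 = 0"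
    and s_le_r: "\<And>j. s j \<le> r j" and u_pos: "\<And>k. Qpoly p q r k x > 0"
begin

lemma Qpoly_comparison:
  "Qpoly p q s n x > 0 \<and> casoratian (\<lambda>k. Qpoly p q r k x) (\<lambda>k. Qpoly p q s k x) n \<ge> 0"
proof (induction n)
  case 0
  have "p 0 * casoratian (\<lambda>k. Qpoly p q r k x) (\<lambda>k. Qpoly p q s k x) 0 \<ge> 0"
    using casoratian_Qpoly[of p 0 q r x s] p_pos[of 0] q0 s_le_r[of 0] by simp
  then show ?case using p_pos[of 0] by (simp add: zero_le_mult_iff)
next
  case (Suc n)
  let ?u = "\<lambda>k. Qpoly p q r k x" and ?v = "\<lambda>k. Qpoly p q s k x"
  have "?u n * ?v (Suc n) \<ge> ?u (Suc n) * ?v n"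
    using Suc.IH unfolding casoratian_def by simp
  moreover have "?u (Suc n) * ?v n > 0" using u_pos Suc.IH by simp
  ultimately have "?u n * ?v (Suc n) > 0" by linarith
  then have v_pos: "?v (Suc n) > 0" using u_pos[of n] by (simp add: zero_less_mult_iff)
  have "(r (Suc n) - s (Suc n)) * ?u (Suc n) * ?v (Suc n) \<ge> 0"
    using s_le_r[of "Suc n"] u_pos[of "Suc n"] v_pos by simp
  moreover have "q (Suc n) * casoratian ?u ?v n \<ge> 0" using q_nonneg Suc.IH by simp
  ultimately have "p (Suc n) * casoratian ?u ?v (Suc n) \<ge> 0"
    using casoratian_Qpoly[of p "Suc n" q r x s] p_pos[of "Suc n"] q0 by simp
  then show ?case using v_pos p_pos[of "Suc n"] by (simp add: zero_le_mult_iff)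
qed

lemma Qpoly_comparison_pos: "Qpoly p q s n x > 0"
  using Qpoly_comparison by blast

lemma Qpoly_ratio_diff:
  "Qpoly p q r n x / Qpoly p q s n x - Qpoly p q r (Suc n) x / Qpoly p q s (Suc n) x
     = casoratian (\<lambda>k. Qpoly p q r k x) (\<lambda>k. Qpoly p q s k x) n
         / (Qpoly p q s n x * Qpoly p q s (Suc n) x)"
  using Qpoly_comparison_pos by (intro casoratian_div) (auto simp: less_imp_neq[symmetric])

lemma Qpoly_ratio_antimono: "antimono (\<lambda>n. Qpoly p q r n x / Qpoly p q s n x)"
proof (rule decseq_SucI)
  fix n
  have "casoratian (\<lambda>k. Qpoly p q r k x) (\<lambda>k. Qpoly p q s k x) n
          / (Qpoly p q s n x * Qpoly p q s (Suc n) x) \<ge> 0"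
    using Qpoly_comparison Qpoly_comparison_pos by (intro divide_nonneg_pos mult_pos_pos) auto
  then show "Qpoly p q r (Suc n) x / Qpoly p q s (Suc n) x \<le> Qpoly p q r n x / Qpoly p q s n x"
    using Qpoly_ratio_diff[of n] by linarith
qed

lemma Qpoly_ratio_strict_decrease:
  assumes "s j < r j"
  shows "Qpoly p q r (Suc j) x / Qpoly p q s (Suc j) x < Qpoly p q r j x / Qpoly p q s j x"
proof -
  let ?u = "\<lambda>k. Qpoly p q r k x" and ?v = "\<lambda>k. Qpoly p q s k x"
  have "(r j - s j) * ?u j * ?v j > 0" using assms u_pos Qpoly_comparison_pos by simp
  moreover have "q j * casoratian ?u ?v (j - 1) \<ge> 0" using q_nonneg Qpoly_comparison by simp
  ultimately have "p j * casoratian ?u ?v j > 0"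
    using casoratian_Qpoly[of p j q r x s] p_pos[of j] q0 by simp
  then have "casoratian ?u ?v j / (?v j * ?v (Suc j)) > 0"
    using p_pos[of j] Qpoly_comparison_pos by (simp add: zero_less_mult_iff)
  then show ?thesis using Qpoly_ratio_diff[of j] by simp
qed

end

lemma antimono_tendsto_below:
  fixes f :: "nat \<Rightarrow> real"
  assumes "antimono f" "\<And>n. f n \<ge> 0" "f k < c"
  shows "\<exists>L. f \<longlonglongrightarrow> L \<and> 0 \<le> L \<and> L < c"
proof -
  have bdd: "bdd_below (range f)" using assms(2) by (intro bdd_belowI[where m = 0]) auto
  have "f \<longlonglongrightarrow> (INF n. f n)"
    using LIMSEQ_decseq_INF[OF bdd] assms(1) by (simp add: antimono_def decseq_def)
  moreover have "0 \<le> (INF n. f n)" using assms(2) by (intro cINF_greatest) auto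
  moreover have "(INF n. f n) \<le> f k" using bdd by (rule cINF_lower) simp
  ultimately show ?thesis using assms(3) by force
qed

theorem lemma2:
  fixes p q r :: "nat \<Rightarrow> real" and \<psi> :: "real measure" and \<theta> :: real
  assumes p_pos: "\<And>j. p j > 0"
    and q_pos: "\<And>j. q (Suc j) > 0"
    and r_nonneg: "\<And>j. r j \<ge> 0"
    and q0: "q 0 = 0"
    and stoch: "\<And>j. p j + q j + r j = 1"
    and psi_borel: "sets \<psi> = sets borel"
    and psi_prob: "prob_space \<psi>"
    and psi_interval: "emeasure \<psi> {-1..1} = 1"
    and psi_inf: "infinite (msupp \<psi>)"
    and psi_orth: "\<And>m n. m \<noteq> n \<Longrightarrow>
                     (\<integral>x. Qpoly p q r m x * Qpoly p q r n x \<partial>\<psi>) = 0"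
    and eta_pos: "Sup (msupp \<psi>) > 0"
    and Q_pos: "\<And>n x. x \<ge> Sup (msupp \<psi>) \<Longrightarrow> Qpoly p q r n x > 0"
    and theta: "\<theta> \<ge> Sup (msupp \<psi>)"
  shows "((\<forall>j. r j = 0) \<longrightarrow>
            (\<forall>n. \<bar>Qpoly p q r n \<theta> / Qpoly p q r n (-\<theta>)\<bar> = 1))
       \<and> ((\<exists>j. r j > 0) \<longrightarrow>
            antimono (\<lambda>n. \<bar>Qpoly p q r n \<theta> / Qpoly p q r n (-\<theta>)\<bar>) \<and>
            (\<exists>L. (\<lambda>n. \<bar>Qpoly p q r n \<theta> / Qpoly p q r n (-\<theta>)\<bar>) \<longlonglongrightarrow> L
                 \<and> 0 \<le> L \<and> L < 1))"
proof -
  let ?u = "\<lambda>n. Qpoly p q r n \<theta>" and ?v = "\<lambda>n. Qpoly p q (\<lambda>j. - r j) n \<theta>"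
  have u_pos: "\<And>n. ?u n > 0" using Q_pos theta by blast
  have q_nonneg: "\<And>j. q j \<ge> 0" using q0 q_pos by (metis less_eq_real_def not0_implies_Suc)
  have neg_r_le_r: "\<And>j. - r j \<le> r j" using r_nonneg by (simp add: order_trans[of _ 0])
  note comparison = Qpoly_comparison_pos[OF p_pos q_nonneg q0 neg_r_le_r u_pos]
  note antimono = Qpoly_ratio_antimono[OF p_pos q_nonneg q0 neg_r_le_r u_pos]
  have ratio: "(\<lambda>n. \<bar>Qpoly p q r n \<theta> / Qpoly p q r n (-\<theta>)\<bar>) = (\<lambda>n. ?u n / ?v n)"
    using u_pos comparison by (simp add: Qpoly_uminus abs_mult power_abs less_imp_le)
  show ?thesis
  proof (intro conjI impI)
    assume "\<forall>j. r j = 0"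
    then have "(\<lambda>j. - r j) = r" by auto
    then have "Qpoly p q r n (-\<theta>) = (-1) ^ n * ?u n" for n
      unfolding Qpoly_uminus by simp
    then show "\<forall>n. \<bar>Qpoly p q r n \<theta> / Qpoly p q r n (-\<theta>)\<bar> = 1"
      using u_pos by (simp add: abs_mult power_abs less_imp_neq[OF u_pos, symmetric])
  next
    show "antimono (\<lambda>n. \<bar>Qpoly p q r n \<theta> / Qpoly p q r n (-\<theta>)\<bar>)" using ratio antimono by simp
  next
    assume "\<exists>j. r j > 0"
    then obtain j where "- r j < r j" by force
    then have "?u (Suc j) / ?v (Suc j) < ?u 0 / ?v 0"
      using Qpoly_ratio_strict_decrease[OF p_pos q_nonneg q0 neg_r_le_r u_pos] antimonoD[OF antimono, of 0 j]
      by (meson le0 less_le_trans)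
    then show "\<exists>L. (\<lambda>n. \<bar>Qpoly p q r n \<theta> / Qpoly p q r n (-\<theta>)\<bar>) \<longlonglongrightarrow> L \<and> 0 \<le> L \<and> L < 1"
      using antimono_tendsto_below[OF antimono, of "Suc j"] u_pos comparison ratio
      by (simp add: less_imp_le)
  qed
qed

end
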